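(* For every $\eta>0$ there exists $k_0=k_0(\eta)$ such that for all $k\ge k_0$ and $n\ge2k$ the following holds. Let $P\subseteq[n]$ with $\eta\le|P|/n\le1-\eta$, and let $M$ be a matching of size $k$ in the complete graph on $[n]$, chosen uniformly at random among all such matchings. Then with probability at least $\frac56$, the number of edges $uv\in M$ with $u\in P$ and $v\notin P$ is at least $\eta k/25$. *)

theory Defs
  imports "HOL-Probability.Probability"
begin

definition complete_edges :: "nat \<Rightarrow> nat set set" where
  "complete_edges n = {e. \<exists>u v. e = {u, v} \<and> u \<noteq> v \<and> u \<in> {1..n} \<and> v \<in> {1..n}}"

definition matchings :: "nat \<Rightarrow> nat \<Rightarrow> nat set set set" where
  "matchings n k = {M. M \<subseteq> complete_edges n \<and> card M = k \<and>
      (\<forall>e\<in>M. \<forall>f\<in>M. e \<noteq> f \<longrightarrow> e \<inter> f = {})}"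

definition crossing :: "nat set \<Rightarrow> nat set set \<Rightarrow> nat" where
  "crossing P M = card {e \<in> M. \<exists>u v. e = {u, v} \<and> u \<in> P \<and> v \<notin> P}"

end

theory Submission
  imports Defs "HOL-Combinatorics.Permutations"
begin

(*
  Second moment method. Let C be the set of edges of the complete graph joining P to its
  complement, so |C| = |P| (n - |P|) >= eta (n choose 2), and let X = |M \<inter> C|. The
  permutations of [n] act on the matchings of size k and are transitive on edges and on ordered
  pairs of disjoint edges. Hence every edge lies in M with probability k / (n choose 2) and every
  ordered pair of disjoint edges with probability k (k - 1) / ((n choose 2) ((n - 2) choose 2)).
  This gives E X = k |C| / (n choose 2) >= eta k and Var X <= E X + 8 k, and Chebyshev's
  inequality bounds the probability of X < eta k / 25 by 1/6 as soon as k eta^2 >= 200.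
*)

definition crossing_edges :: "nat set \<Rightarrow> nat \<Rightarrow> nat set set" where
  "crossing_edges P n = {e \<in> complete_edges n. \<exists>u v. e = {u, v} \<and> u \<in> P \<and> v \<notin> P}"

definition disjoint_edge_pairs :: "nat \<Rightarrow> (nat set \<times> nat set) set" where
  "disjoint_edge_pairs n = {(e, f) \<in> complete_edges n \<times> complete_edges n. e \<inter> f = {}}"

lemma complete_edges_altdef: "complete_edges n = {e. e \<subseteq> {1..n} \<and> card e = 2}"
  unfolding complete_edges_def card_2_iff by blast

lemma finite_complete_edges [simp]: "finite (complete_edges n)"
  unfolding complete_edges_altdef by (rule finite_subset[of _ "Pow {1..n}"]) auto

lemma card_complete_edges: "card (complete_edges n) = n choose 2"
  unfolding complete_edges_altdef by (simp add: n_subsets)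

lemma finite_disjoint_edge_pairs [simp]: "finite (disjoint_edge_pairs n)"
  unfolding disjoint_edge_pairs_def by (rule finite_subset[of _ "complete_edges n \<times> complete_edges n"]) auto

lemma card_disjoint_edge_pairs:
  "card (disjoint_edge_pairs n) = (n choose 2) * ((n - 2) choose 2)"
proof -
  have "card {f \<in> complete_edges n. e \<inter> f = {}} = (n - 2) choose 2"
    if "e \<in> complete_edges n" for e
  proof -
    have "{f \<in> complete_edges n. e \<inter> f = {}} = {f. f \<subseteq> {1..n} - e \<and> card f = 2}"
      unfolding complete_edges_altdef by auto
    moreover have "card ({1..n} - e) = n - 2"
      using that unfolding complete_edges_altdef by (subst card_Diff_subset) (auto intro: finite_subset)
    ultimately show ?thesis
      by (simp add: n_subsets)
  qed
  moreover have "disjoint_edge_pairs n = Sigma (complete_edges n) (\<lambda>e. {f \<in> complete_edges n. e \<inter> f = {}})"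
    unfolding disjoint_edge_pairs_def by auto
  ultimately show ?thesis
    by (simp add: card_SigmaI card_complete_edges)
qed

lemma card_crossing_edges:
  assumes "P \<subseteq> {1..n}"
  shows "card (crossing_edges P n) = card P * (n - card P)"
proof -
  have "crossing_edges P n = (\<lambda>(u, v). {u, v}) ` (P \<times> ({1..n} - P))"
  proof (intro equalityI subsetI)
    fix e
    assume "e \<in> crossing_edges P n"
    then obtain u v where "e = {u, v}" "u \<in> P" "v \<notin> P" "e \<subseteq> {1..n}"
      unfolding crossing_edges_def complete_edges_altdef by blast
    then show "e \<in> (\<lambda>(u, v). {u, v}) ` (P \<times> ({1..n} - P))"
      by (intro image_eqI[where x = "(u, v)"]) auto
  next
    fix e
    assume "e \<in> (\<lambda>(u, v). {u, v}) ` (P \<times> ({1..n} - P))"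
    then obtain u v where "e = {u, v}" "u \<in> P" "v \<in> {1..n}" "v \<notin> P"
      by auto
    moreover from this have "u \<noteq> v" "u \<in> {1..n}"
      using assms by auto
    ultimately show "e \<in> crossing_edges P n"
      unfolding crossing_edges_def complete_edges_def by blast
  qed
  moreover have "inj_on (\<lambda>(u, v). {u, v}) (P \<times> ({1..n} - P))"
    by (auto simp: inj_on_def doubleton_eq_iff)
  moreover have "card ({1..n} - P) = n - card P"
    using assms by (simp add: card_Diff_subset finite_subset)
  ultimately show ?thesis
    by (simp add: card_image card_cartesian_product)
qed

lemma finite_matchings [simp]: "finite (matchings n k)"
  unfolding matchings_def by (rule finite_subset[of _ "Pow (complete_edges n)"]) auto

lemma matchings_nonempty:
  assumes "2 * k \<le> n"
  shows "matchings n k \<noteq> {}"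
proof -
  define M where "M = (\<lambda>i. {2 * i + 1, 2 * i + 2}) ` {..<k}"
  have "M \<subseteq> complete_edges n"
  proof
    fix e
    assume "e \<in> M"
    then obtain i where i: "i < k" "e = {2 * i + 1, 2 * i + 2}"
      unfolding M_def by blast
    then have "2 * i + 1 \<noteq> 2 * i + 2" "2 * i + 1 \<in> {1..n}" "2 * i + 2 \<in> {1..n}"
      using assms by auto
    then show "e \<in> complete_edges n"
      unfolding complete_edges_def using i(2) by blast
  qed
  moreover have "card M = k"
    unfolding M_def by (subst card_image) (auto simp: inj_on_def doubleton_eq_iff)
  moreover have "e \<inter> f = {}" if ef: "e \<in> M" "f \<in> M" "e \<noteq> f" for e f
  proof -
    obtain i j where "e = {2 * i + 1, 2 * i + 2}" "f = {2 * j + 1, 2 * j + 2}" "i \<noteq> j"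
      using ef unfolding M_def by blast
    then show ?thesis
      by auto
  qed
  ultimately have "M \<in> matchings n k"
    unfolding matchings_def by blast
  then show ?thesis
    by blast
qed

lemma crossing_eq_card_Int:
  assumes "M \<in> matchings n k"
  shows "crossing P M = card (M \<inter> crossing_edges P n)"
proof -
  have "M \<subseteq> complete_edges n"
    using assms by (simp add: matchings_def)
  then have "{e \<in> M. \<exists>u v. e = {u, v} \<and> u \<in> P \<and> v \<notin> P} = M \<inter> crossing_edges P n"
    unfolding crossing_edges_def by blast
  then show ?thesis
    unfolding crossing_def by simp
qed

lemma permutes_map_exists:
  assumes "distinct xs" "distinct ys" "length xs = length ys" "set xs \<subseteq> S" "set ys \<subseteq> S"
  shows "\<exists>\<sigma>. \<sigma> permutes S \<and> map \<sigma> xs = ys"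
  using assms
proof (induction xs arbitrary: ys)
  case Nil
  then show ?case
    by (auto intro: permutes_id)
next
  case (Cons x xs)
  then obtain y ys' where ys: "ys = y # ys'"
    by (cases ys) auto
  with Cons obtain \<sigma> where \<sigma>: "\<sigma> permutes S" "map \<sigma> xs = ys'"
    by auto
  \<comment> \<open>qualified because the matrix transpose of HOL-Analysis is also in scope\<close>
  define \<tau> where "\<tau> = Transposition.transpose (\<sigma> x) y \<circ> \<sigma>"
  have "\<sigma> x \<notin> set ys'"
    using Cons.prems(1) permutes_inj[OF \<sigma>(1)] by (auto simp: \<sigma>(2)[symmetric] dest: injD)
  moreover have "y \<notin> set ys'"
    using Cons.prems(2) ys by simp
  ultimately have "map (Transposition.transpose (\<sigma> x) y) ys' = ys'"
    by (intro map_idI transpose_apply_other) auto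
  then have "map \<tau> (x # xs) = ys"
    unfolding \<tau>_def ys \<sigma>(2)[symmetric] by simp
  moreover have "\<tau> permutes S"
    using Cons.prems(4,5) ys unfolding \<tau>_def
    by (intro permutes_compose[OF \<sigma>(1)] permutes_swap_id) (auto simp: permutes_in_image[OF \<sigma>(1)])
  ultimately show ?case
    by blast
qed

lemma permutes_image_matching:
  assumes \<sigma>: "\<sigma> permutes {1..n}" and M: "M \<in> matchings n k"
  shows "(`) \<sigma> ` M \<in> matchings n k"
proof -
  have inj: "inj \<sigma>"
    using \<sigma> by (rule permutes_inj)
  have "\<sigma> ` e \<in> complete_edges n" if "e \<in> complete_edges n" for e
    using that permutes_image[OF \<sigma>] inj_on_subset[OF inj]
    unfolding complete_edges_altdef by (auto simp: card_image)
  then have "(`) \<sigma> ` M \<subseteq> complete_edges n"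
    using M unfolding matchings_def by auto
  moreover have "card ((`) \<sigma> ` M) = k"
    using M inj unfolding matchings_def by (auto simp: card_image inj_on_def inj_image_eq_iff)
  moreover have "\<sigma> ` e \<inter> \<sigma> ` f = {}" if "e \<in> M" "f \<in> M" "\<sigma> ` e \<noteq> \<sigma> ` f" for e f
  proof -
    have "e \<inter> f = {}"
      using that M unfolding matchings_def by blast
    then show ?thesis
      by (simp add: image_Int[OF inj, symmetric])
  qed
  ultimately show ?thesis
    unfolding matchings_def by blast
qed

lemma card_matchings_superset_le_permutes:
  assumes "\<sigma> permutes {1..n}"
  shows "card {M \<in> matchings n k. F \<subseteq> M} \<le> card {M \<in> matchings n k. (`) \<sigma> ` F \<subseteq> M}"
proof (rule card_inj_on_le)
  show "inj_on ((`) ((`) \<sigma>)) {M \<in> matchings n k. F \<subseteq> M}"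
    using permutes_inj[OF assms] by (auto simp: inj_on_def inj_image_eq_iff)
  show "(`) ((`) \<sigma>) ` {M \<in> matchings n k. F \<subseteq> M} \<subseteq> {M \<in> matchings n k. (`) \<sigma> ` F \<subseteq> M}"
    using permutes_image_matching[OF assms] by auto
qed simp

lemma card_matchings_superset_permutes:
  assumes "\<sigma> permutes {1..n}"
  shows "card {M \<in> matchings n k. (`) \<sigma> ` F \<subseteq> M} = card {M \<in> matchings n k. F \<subseteq> M}"
proof (rule antisym)
  have "(`) (inv \<sigma>) ` (`) \<sigma> ` F = F"
    by (simp add: image_image permutes_inverses[OF assms])
  then show "card {M \<in> matchings n k. (`) \<sigma> ` F \<subseteq> M} \<le> card {M \<in> matchings n k. F \<subseteq> M}"
    using card_matchings_superset_le_permutes[OF permutes_inv[OF assms], of k "(`) \<sigma> ` F"] by simp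
qed (rule card_matchings_superset_le_permutes[OF assms])

lemma card_matchings_containing_edge:
  assumes "e \<in> complete_edges n" "e' \<in> complete_edges n"
  shows "card {M \<in> matchings n k. e \<in> M} = card {M \<in> matchings n k. e' \<in> M}"
proof -
  obtain u v u' v' where "e = {u, v}" "u \<noteq> v" "u \<in> {1..n}" "v \<in> {1..n}"
    and "e' = {u', v'}" "u' \<noteq> v'" "u' \<in> {1..n}" "v' \<in> {1..n}"
    using assms unfolding complete_edges_def by blast
  moreover from this obtain \<sigma> where "\<sigma> permutes {1..n}" "map \<sigma> [u, v] = [u', v']"
    using permutes_map_exists[of "[u, v]" "[u', v']" "{1..n}"] by auto
  ultimately show ?thesis
    using card_matchings_superset_permutes[of \<sigma> n k "{e}"] by simp
qed

lemma card_matchings_containing_disjoint_edges: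
  assumes "(e, f) \<in> disjoint_edge_pairs n" "(e', f') \<in> disjoint_edge_pairs n"
  shows "card {M \<in> matchings n k. e \<in> M \<and> f \<in> M} = card {M \<in> matchings n k. e' \<in> M \<and> f' \<in> M}"
proof -
  obtain u v w x where uv: "e = {u, v}" "f = {w, x}" "distinct [u, v, w, x]" "set [u, v, w, x] \<subseteq> {1..n}"
    using assms(1) unfolding disjoint_edge_pairs_def complete_edges_def by auto
  obtain u' v' w' x' where uv': "e' = {u', v'}" "f' = {w', x'}" "distinct [u', v', w', x']"
      "set [u', v', w', x'] \<subseteq> {1..n}"
    using assms(2) unfolding disjoint_edge_pairs_def complete_edges_def by auto
  obtain \<sigma> where "\<sigma> permutes {1..n}" "map \<sigma> [u, v, w, x] = [u', v', w', x']"
    using permutes_map_exists[OF uv(3) uv'(3) _ uv(4) uv'(4)] by auto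
  with uv uv' show ?thesis
    using card_matchings_superset_permutes[of \<sigma> n k "{e, f}"] by simp
qed

lemma sum_card_filter_commute:
  assumes "finite X" "finite Y"
  shows "(\<Sum>x\<in>X. card {y \<in> Y. R x y}) = (\<Sum>y\<in>Y. card {x \<in> X. R x y})"
proof -
  have "(\<Sum>x\<in>X. card {y \<in> Y. R x y}) = (\<Sum>x\<in>X. \<Sum>y\<in>Y. of_bool (R x y))"
    using assms(2) by (simp add: Int_def)
  also have "\<dots> = (\<Sum>y\<in>Y. \<Sum>x\<in>X. of_bool (R x y))"
    by (rule sum.swap)
  also have "\<dots> = (\<Sum>y\<in>Y. card {x \<in> X. R x y})"
    using assms(1) by (simp add: Int_def)
  finally show ?thesis .
qed

lemma card_square_eq_card_plus_offdiag:
  assumes "finite B"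
  shows "card B ^ 2 = card B + card {(a, b) \<in> B \<times> B. a \<noteq> b}"
proof -
  define D where "D = {(a, b) \<in> B \<times> B. a \<noteq> b}"
  have "B \<times> B = (\<lambda>a. (a, a)) ` B \<union> D"
    unfolding D_def by auto
  moreover have "card ((\<lambda>a. (a, a)) ` B \<union> D) = card ((\<lambda>a. (a, a)) ` B) + card D"
    using assms by (intro card_Un_disjoint) (auto simp: D_def intro: finite_subset[of _ "B \<times> B"])
  moreover have "card ((\<lambda>a. (a, a)) ` B) = card B"
    by (rule card_image) (auto simp: inj_on_def)
  ultimately have "card (B \<times> B) = card B + card D"
    by simp
  then show ?thesis
    unfolding D_def by (simp add: card_cartesian_product power2_eq_square)
qed

lemma card_Int_matching_square:
  assumes "M \<in> matchings n k"
  shows "card (M \<inter> A) ^ 2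
    = card (M \<inter> A) + card {(e, f) \<in> disjoint_edge_pairs n \<inter> A \<times> A. e \<in> M \<and> f \<in> M}"
proof -
  have M: "M \<subseteq> complete_edges n" "\<forall>e\<in>M. \<forall>f\<in>M. e \<noteq> f \<longrightarrow> e \<inter> f = {}"
    using assms unfolding matchings_def by auto
  have "{(e, f) \<in> (M \<inter> A) \<times> (M \<inter> A). e \<noteq> f}
      = {(e, f) \<in> disjoint_edge_pairs n \<inter> A \<times> A. e \<in> M \<and> f \<in> M}"
  proof (intro equalityI subsetI)
    fix p
    assume "p \<in> {(e, f) \<in> (M \<inter> A) \<times> (M \<inter> A). e \<noteq> f}"
    then obtain e f where "p = (e, f)" "e \<in> M \<inter> A" "f \<in> M \<inter> A" "e \<noteq> f"
      by auto
    then show "p \<in> {(e, f) \<in> disjoint_edge_pairs n \<inter> A \<times> A. e \<in> M \<and> f \<in> M}"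
      using M unfolding disjoint_edge_pairs_def by auto
  next
    fix p
    assume "p \<in> {(e, f) \<in> disjoint_edge_pairs n \<inter> A \<times> A. e \<in> M \<and> f \<in> M}"
    then obtain e f where ef: "p = (e, f)" "e \<in> M \<inter> A" "f \<in> M \<inter> A" "e \<inter> f = {}"
      "e \<in> complete_edges n"
      unfolding disjoint_edge_pairs_def by auto
    moreover have "e \<noteq> {}"
      using ef(5) unfolding complete_edges_def by auto
    ultimately show "p \<in> {(e, f) \<in> (M \<inter> A) \<times> (M \<inter> A). e \<noteq> f}"
      by auto
  qed
  moreover have "finite (M \<inter> A)"
    using M(1) by (auto intro: finite_subset)
  ultimately show ?thesis
    by (simp add: card_square_eq_card_plus_offdiag)
qed

lemma sum_card_Int_matchings:
  assumes "A \<subseteq> complete_edges n" "e \<in> complete_edges n"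
  shows "(\<Sum>M\<in>matchings n k. card (M \<inter> A)) = card A * card {M \<in> matchings n k. e \<in> M}"
proof -
  have "(\<Sum>M\<in>matchings n k. card (M \<inter> A)) = (\<Sum>M\<in>matchings n k. card {e' \<in> A. e' \<in> M})"
    by (intro sum.cong arg_cong[where f = card]) auto
  also have "\<dots> = (\<Sum>e'\<in>A. card {M \<in> matchings n k. e' \<in> M})"
    using assms(1) by (intro sum_card_filter_commute) (auto intro: finite_subset)
  also have "\<dots> = (\<Sum>e'\<in>A. card {M \<in> matchings n k. e \<in> M})"
    using assms by (intro sum.cong refl card_matchings_containing_edge) auto
  finally show ?thesis
    by simp
qed

lemma sum_card_pairs_matchings:
  assumes "D \<subseteq> disjoint_edge_pairs n" "(e, f) \<in> disjoint_edge_pairs n"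
  shows "(\<Sum>M\<in>matchings n k. card {(e', f') \<in> D. e' \<in> M \<and> f' \<in> M})
    = card D * card {M \<in> matchings n k. e \<in> M \<and> f \<in> M}"
proof -
  have "finite D"
    using assms(1) by (rule finite_subset) simp
  have "{(e', f') \<in> D. e' \<in> M \<and> f' \<in> M} = {p \<in> D. fst p \<in> M \<and> snd p \<in> M}" for M
    by auto
  then have "(\<Sum>M\<in>matchings n k. card {(e', f') \<in> D. e' \<in> M \<and> f' \<in> M})
      = (\<Sum>M\<in>matchings n k. card {p \<in> D. fst p \<in> M \<and> snd p \<in> M})"
    by simp
  also have "\<dots> = (\<Sum>p\<in>D. card {M \<in> matchings n k. fst p \<in> M \<and> snd p \<in> M})"
    using \<open>finite D\<close> by (intro sum_card_filter_commute) simp_all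
  also have "\<dots> = (\<Sum>p\<in>D. card {M \<in> matchings n k. e \<in> M \<and> f \<in> M})"
  proof (intro sum.cong refl)
    fix p
    assume "p \<in> D"
    then have "(fst p, snd p) \<in> disjoint_edge_pairs n"
      using assms(1) by auto
    then show "card {M \<in> matchings n k. fst p \<in> M \<and> snd p \<in> M}
        = card {M \<in> matchings n k. e \<in> M \<and> f \<in> M}"
      using assms(2) by (rule card_matchings_containing_disjoint_edges)
  qed
  finally show ?thesis
    by simp
qed

lemma card_matchings_containing_edge_eq:
  assumes "e \<in> complete_edges n"
  shows "real (card {M \<in> matchings n k. e \<in> M})
    = real (card (matchings n k)) * real k / real (n choose 2)"
proof -
  have "M \<inter> complete_edges n = M" "card M = k" if "M \<in> matchings n k" for M
    using that unfolding matchings_def by auto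
  then have "card (matchings n k) * k = (n choose 2) * card {M \<in> matchings n k. e \<in> M}"
    using sum_card_Int_matchings[OF subset_refl assms, of k] by (simp add: card_complete_edges)
  moreover have "n choose 2 > 0"
    using assms card_complete_edges[of n] by (metis card_gt_0_iff empty_iff finite_complete_edges)
  ultimately show ?thesis
    by (simp add: field_simps flip: of_nat_mult)
qed

lemma card_matchings_containing_disjoint_edges_eq:
  assumes "(e, f) \<in> disjoint_edge_pairs n"
  shows "real (card {M \<in> matchings n k. e \<in> M \<and> f \<in> M})
    = real (card (matchings n k)) * real k * (real k - 1) / real ((n choose 2) * ((n - 2) choose 2))"
proof -
  have "card {(e, f) \<in> disjoint_edge_pairs n. e \<in> M \<and> f \<in> M} = k * k - k"
    if "M \<in> matchings n k" for M
  proof -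
    have "M \<inter> complete_edges n = M" "card M = k"
      using that unfolding matchings_def by auto
    moreover have "disjoint_edge_pairs n \<inter> complete_edges n \<times> complete_edges n = disjoint_edge_pairs n"
      unfolding disjoint_edge_pairs_def by auto
    ultimately show ?thesis
      using card_Int_matching_square[OF that, of "complete_edges n"] by (simp add: power2_eq_square)
  qed
  then have "card (matchings n k) * (k * k - k)
      = card (disjoint_edge_pairs n) * card {M \<in> matchings n k. e \<in> M \<and> f \<in> M}"
    using sum_card_pairs_matchings[OF subset_refl assms, of k] by simp
  moreover have "real (k * k - k) = real k * (real k - 1)"
    by (cases k) (simp_all add: algebra_simps)
  ultimately have "real (card (matchings n k)) * (real k * (real k - 1))
      = real (card (disjoint_edge_pairs n)) * real (card {M \<in> matchings n k. e \<in> M \<and> f \<in> M})"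
    by (metis of_nat_mult)
  moreover have "disjoint_edge_pairs n \<noteq> {}"
    using assms by auto
  ultimately show ?thesis
    unfolding card_disjoint_edge_pairs[symmetric] by (simp add: field_simps)
qed

lemma real_choose_two: "real (n choose 2) = real n * (real n - 1) / 2"
proof (induction n)
  case (Suc n)
  have "Suc n choose 2 = n + (n choose 2)"
    using binomial_Suc_Suc[of n 1] by (simp add: numeral_2_eq_2)
  with Suc show ?case
    by (simp add: field_simps)
qed simp

lemma mult_choose_two_diff_le:
  assumes "6 \<le> n" "2 * k \<le> n"
  shows "real k * (real (n choose 2) - real ((n - 2) choose 2)) \<le> 8 * real ((n - 2) choose 2)"
proof -
  have n2: "real (n - 2) = real n - 2"
    using assms(1) by simp
  have "real (n choose 2) - real ((n - 2) choose 2) = 2 * real n - 3"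
    by (simp add: real_choose_two n2 field_simps)
  then have "real k * (real (n choose 2) - real ((n - 2) choose 2)) = real k * (2 * real n - 3)"
    by simp
  also have "\<dots> \<le> real n / 2 * (2 * real n - 3)"
    using assms by (intro mult_right_mono) auto
  also have "\<dots> \<le> 4 * (real n - 2) * (real n - 3)"
    using assms(1) mult_nonneg_nonneg[of "real n - 6" "6 * real n - 1"] by (simp add: algebra_simps)
  also have "\<dots> = 8 * real ((n - 2) choose 2)"
    by (simp add: real_choose_two n2 field_simps)
  finally show ?thesis .
qed

lemma Chebyshev_counting:
  fixes X :: "'a \<Rightarrow> real"
  assumes "finite A" "t \<le> \<mu>"
  shows "real (card {x \<in> A. X x < t}) * (\<mu> - t)\<^sup>2 \<le> (\<Sum>x\<in>A. (X x - \<mu>)\<^sup>2)"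
proof -
  have "real (card {x \<in> A. X x < t}) * (\<mu> - t)\<^sup>2 = (\<Sum>x\<in>{x \<in> A. X x < t}. (\<mu> - t)\<^sup>2)"
    by simp
  also have "\<dots> \<le> (\<Sum>x\<in>{x \<in> A. X x < t}. (X x - \<mu>)\<^sup>2)"
    using assms(2) by (intro sum_mono) (simp add: power2_commute[of "X _"] power_mono)
  also have "\<dots> \<le> (\<Sum>x\<in>A. (X x - \<mu>)\<^sup>2)"
    using assms(1) by (intro sum_mono2) auto
  finally show ?thesis .
qed

lemma sum_card_Int_matchings_eq:
  assumes "2 \<le> n" "A \<subseteq> complete_edges n"
  shows "(\<Sum>M\<in>matchings n k. real (card (M \<inter> A)))
    = real (card (matchings n k)) * (real k * real (card A) / real (n choose 2))"
proof -
  have "{1, 2} \<in> complete_edges n"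
    using assms(1) by (simp add: complete_edges_altdef)
  then show ?thesis
    using sum_card_Int_matchings[OF assms(2), of _ k] card_matchings_containing_edge_eq[of _ n k]
    by (simp flip: of_nat_sum)
qed

lemma sum_card_Int_matchings_square_eq:
  assumes "4 \<le> n"
  shows "(\<Sum>M\<in>matchings n k. real (card (M \<inter> A)) ^ 2)
    = (\<Sum>M\<in>matchings n k. real (card (M \<inter> A)))
      + real (card (disjoint_edge_pairs n \<inter> A \<times> A)) * (real (card (matchings n k)) * real k
          * (real k - 1) / real ((n choose 2) * ((n - 2) choose 2)))"
proof -
  have e: "({1, 2}, {3, 4}) \<in> disjoint_edge_pairs n"
    using assms by (auto simp: disjoint_edge_pairs_def complete_edges_altdef)
  have "real (card (M \<inter> A)) ^ 2 = real (card (M \<inter> A))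
      + real (card {(e, f) \<in> disjoint_edge_pairs n \<inter> A \<times> A. e \<in> M \<and> f \<in> M})"
    if "M \<in> matchings n k" for M
    using arg_cong[where f = real, OF card_Int_matching_square[OF that, of A]] by simp
  then have "(\<Sum>M\<in>matchings n k. real (card (M \<inter> A)) ^ 2)
      = (\<Sum>M\<in>matchings n k. real (card (M \<inter> A)))
        + real (\<Sum>M\<in>matchings n k. card {(e, f) \<in> disjoint_edge_pairs n \<inter> A \<times> A. e \<in> M \<and> f \<in> M})"
    by (simp add: sum.distrib)
  also have "real (\<Sum>M\<in>matchings n k. card {(e, f) \<in> disjoint_edge_pairs n \<inter> A \<times> A. e \<in> M \<and> f \<in> M})
      = real (card (disjoint_edge_pairs n \<inter> A \<times> A)) * real (card {M \<in> matchings n k. {1, 2} \<in> M \<and> {3, 4} \<in> M})"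
    by (subst sum_card_pairs_matchings[OF _ e]) auto
  finally show ?thesis
    using card_matchings_containing_disjoint_edges_eq[OF e, of k] by simp
qed

lemma variance_excess_le:
  fixes a d m m' :: real and k :: nat
  assumes "d \<le> a\<^sup>2" "0 \<le> a" "a \<le> m" "0 < m'" "m' \<le> m" "real k * (m - m') \<le> 8 * m'"
  shows "d * (real k * (real k - 1) / (m * m')) - (real k * a / m)\<^sup>2 \<le> 8 * real k"
proof -
  have "0 < m * m'"
    using assms(4,5) by simp
  moreover have "0 \<le> real k * (real k - 1)"
    by (cases k) simp_all
  ultimately have "real k * (real k - 1) / (m * m') \<le> real k * real k / (m * m')"
    and "0 \<le> real k * (real k - 1) / (m * m')"
    by (simp_all add: divide_right_mono algebra_simps)
  then have "d * (real k * (real k - 1) / (m * m')) \<le> a\<^sup>2 * (real k * real k / (m * m'))"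
    using assms(1) by (intro mult_mono) auto
  also have "\<dots> - (real k * a / m)\<^sup>2 = (a / m)\<^sup>2 * (real k * (real k * (m - m') / m'))"
    using assms(4,5) by (simp add: field_simps power2_eq_square)
  also have "\<dots> \<le> 1 * (real k * 8)"
  proof (intro mult_mono mult_left_mono)
    show "(a / m)\<^sup>2 \<le> 1"
      using assms(2-5) by (simp add: power_le_one)
    show "real k * (m - m') / m' \<le> 8"
      using assms(4,6) by (simp add: divide_le_eq)
  qed (use assms(4,5) in auto)
  finally show ?thesis
    by simp
qed

lemma sum_sq_dev_card_Int_matchings_le:
  fixes A :: "nat set set"
  assumes n: "6 \<le> n" "2 * k \<le> n" and A: "A \<subseteq> complete_edges n"
  defines "\<mu> \<equiv> real k * real (card A) / real (n choose 2)"
  shows "(\<Sum>M\<in>matchings n k. (real (card (M \<inter> A)) - \<mu>)\<^sup>2)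
    \<le> real (card (matchings n k)) * (\<mu> + 8 * real k)"
proof -
  define N where "N = real (card (matchings n k))"
  define m where "m = real (n choose 2)"
  define m' where "m' = real ((n - 2) choose 2)"
  define d where "d = real (card (disjoint_edge_pairs n \<inter> A \<times> A))"
  define X where "X M = real (card (M \<inter> A))" for M
  have sum1: "(\<Sum>M\<in>matchings n k. X M) = N * \<mu>"
    using sum_card_Int_matchings_eq[OF _ A] n(1) unfolding X_def N_def \<mu>_def by simp
  have sum2: "(\<Sum>M\<in>matchings n k. X M ^ 2) = N * \<mu> + N * (d * (real k * (real k - 1) / (m * m')))"
    using sum_card_Int_matchings_square_eq[where A = A and k = k] n(1) sum1
    unfolding X_def N_def d_def m_def m'_def by (simp add: algebra_simps)
  have "finite A"
    using A by (rule finite_subset) simp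
  then have "card (disjoint_edge_pairs n \<inter> A \<times> A) \<le> card (A \<times> A)"
    by (intro card_mono) auto
  then have "d \<le> (real (card A))\<^sup>2"
    unfolding d_def by (simp add: card_cartesian_product power2_eq_square flip: of_nat_mult)
  moreover have "real (card A) \<le> m"
    using card_mono[OF finite_complete_edges A] unfolding m_def by (simp add: card_complete_edges)
  moreover have "0 < m'" "m' \<le> m"
    unfolding m_def m'_def using n(1) by (simp_all add: binomial_right_mono)
  ultimately have excess: "d * (real k * (real k - 1) / (m * m')) - \<mu>\<^sup>2 \<le> 8 * real k"
    using variance_excess_le mult_choose_two_diff_le[OF n] unfolding \<mu>_def m_def m'_def by simp
  have "(\<Sum>M\<in>matchings n k. (X M - \<mu>)\<^sup>2)
      = (\<Sum>M\<in>matchings n k. X M ^ 2) - 2 * \<mu> * (\<Sum>M\<in>matchings n k. X M) + N * \<mu>\<^sup>2"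
    unfolding N_def by (simp add: power2_diff sum.distrib sum_subtractf sum_distrib_left algebra_simps)
  also have "\<dots> = N * \<mu> + N * (d * (real k * (real k - 1) / (m * m')) - \<mu>\<^sup>2)"
    unfolding sum1 sum2 by (simp add: algebra_simps power2_eq_square)
  also have "\<dots> \<le> N * \<mu> + N * (8 * real k)"
    using excess unfolding N_def by (intro add_left_mono mult_left_mono) auto
  finally show ?thesis
    unfolding X_def N_def by (simp add: algebra_simps)
qed

lemma prob_matchings_crossing_ge:
  fixes P :: "nat set"
  assumes n: "6 \<le> n" "2 * k \<le> n"
  defines "\<mu> \<equiv> real k * real (card (crossing_edges P n)) / real (n choose 2)"
  assumes t: "t < \<mu>"
  shows "1 - (\<mu> + 8 * real k) / (\<mu> - t)\<^sup>2
    \<le> measure_pmf.prob (pmf_of_set (matchings n k)) {M. t \<le> real (crossing P M)}"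
proof -
  define C where "C = crossing_edges P n"
  define N where "N = real (card (matchings n k))"
  define L where "L = {M \<in> matchings n k. real (card (M \<inter> C)) < t}"
  have "C \<subseteq> complete_edges n"
    unfolding C_def crossing_edges_def by auto
  have "real (card L) * (\<mu> - t)\<^sup>2 \<le> (\<Sum>M\<in>matchings n k. (real (card (M \<inter> C)) - \<mu>)\<^sup>2)"
    unfolding L_def using t by (intro Chebyshev_counting) auto
  also have "\<dots> \<le> N * (\<mu> + 8 * real k)"
    using sum_sq_dev_card_Int_matchings_le[OF n \<open>C \<subseteq> complete_edges n\<close>]
    unfolding \<mu>_def C_def N_def .
  finally have "real (card L) * (\<mu> - t)\<^sup>2 \<le> N * (\<mu> + 8 * real k)" .
  moreover have "N > 0"
    unfolding N_def using matchings_nonempty[OF n(2)] by (simp add: card_gt_0_iff)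
  ultimately have bound: "real (card L) / N \<le> (\<mu> + 8 * real k) / (\<mu> - t)\<^sup>2"
    using t by (simp add: field_simps)
  have "crossing P M = card (M \<inter> C)" if "M \<in> matchings n k" for M
    unfolding C_def using that by (rule crossing_eq_card_Int)
  then have "matchings n k \<inter> {M. t \<le> real (crossing P M)} = matchings n k - L"
    unfolding L_def by auto
  then have "measure_pmf.prob (pmf_of_set (matchings n k)) {M. t \<le> real (crossing P M)}
      = real (card (matchings n k - L)) / N"
    using matchings_nonempty[OF n(2)] unfolding N_def by (simp add: measure_pmf_of_set)
  also have "real (card (matchings n k - L)) = N - real (card L)"
    unfolding N_def L_def by (simp add: card_Diff_subset of_nat_diff card_mono)
  finally show ?thesis
    using bound \<open>N > 0\<close> by (simp add: diff_divide_distrib)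
qed

lemma crossing_edges_density_ge:
  fixes \<eta> :: real
  assumes P: "P \<subseteq> {1..n}" and "2 \<le> n" "0 \<le> \<eta>"
    and lo: "\<eta> \<le> real (card P) / real n" and hi: "real (card P) / real n \<le> 1 - \<eta>"
  shows "\<eta> \<le> real (card (crossing_edges P n)) / real (n choose 2)"
proof -
  define p where "p = real (card P)"
  have "card P \<le> n"
    using card_mono[OF finite_atLeastAtMost P] by simp
  then have np: "real (n - card P) = real n - p"
    unfolding p_def by simp
  have "0 < real n"
    using \<open>2 \<le> n\<close> by simp
  then have "\<eta> * real n \<le> p" "p \<le> (1 - \<eta>) * real n"
    using lo hi unfolding p_def by (simp_all add: pos_le_divide_eq pos_divide_le_eq)
  then have bounds: "\<eta> * real n \<le> p" "\<eta> * real n \<le> real n - p"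
    by (simp_all add: algebra_simps)
  have "\<eta> * real n * (real n / 2) \<le> p * (real n - p)"
  proof (cases "real n / 2 \<le> p")
    case True
    then show ?thesis
      using bounds \<open>0 \<le> \<eta>\<close> by (subst mult.commute) (intro mult_mono; simp)
  next
    case False
    then show ?thesis
      using bounds \<open>0 \<le> \<eta>\<close> by (intro mult_mono) (auto simp: p_def)
  qed
  moreover have "\<eta> * real (n choose 2) \<le> \<eta> * real n * (real n / 2)"
    using \<open>0 \<le> \<eta>\<close> by (simp add: real_choose_two mult_left_mono field_simps)
  moreover have "0 < real (n choose 2)"
    using \<open>2 \<le> n\<close> by simp
  ultimately show ?thesis
    by (simp add: card_crossing_edges[OF P] np p_def pos_le_divide_eq)
qed

lemma variance_ratio_le_one_sixth:
  fixes \<eta> k \<mu> :: real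
  assumes "0 < \<eta>" "\<eta> \<le> 1" "200 \<le> k * \<eta>\<^sup>2" "k * \<eta> \<le> \<mu>"
  shows "(\<mu> + 8 * k) / (\<mu> - \<eta> * k / 25)\<^sup>2 \<le> 1 / 6"
proof -
  have "0 < k * \<eta>\<^sup>2"
    using assms(3) by linarith
  then have "0 \<le> k"
    using zero_le_power2[of \<eta>] by (simp add: zero_less_mult_iff)
  have "\<eta> * \<eta> \<le> \<eta> * 1"
    using assms(1,2) by (intro mult_left_mono) auto
  then have "k * \<eta>\<^sup>2 \<le> k * \<eta>"
    using \<open>0 \<le> k\<close> by (simp add: power2_eq_square mult_left_mono)
  then have "200 \<le> \<mu>"
    using assms by linarith
  have "24 / 25 * \<mu> \<le> \<mu> - \<eta> * k / 25"
    using assms by (simp add: mult.commute)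
  then have "(24 / 25 * \<mu>)\<^sup>2 \<le> (\<mu> - \<eta> * k / 25)\<^sup>2"
    using \<open>200 \<le> \<mu>\<close> by (intro power_mono) auto
  moreover have "(24 / 25 * \<mu>)\<^sup>2 = 576 / 625 * \<mu>\<^sup>2"
    by (simp add: power2_eq_square)
  ultimately have "576 / 625 * \<mu>\<^sup>2 \<le> (\<mu> - \<eta> * k / 25)\<^sup>2"
    by linarith
  moreover have "200 * k \<le> \<mu>\<^sup>2"
  proof -
    have "200 * k \<le> (k * \<eta>)\<^sup>2"
      using assms(3) \<open>0 \<le> k\<close> mult_left_mono[OF assms(3) \<open>0 \<le> k\<close>] by (simp add: power2_eq_square algebra_simps)
    also have "\<dots> \<le> \<mu>\<^sup>2"
      using assms \<open>0 \<le> k\<close> by (intro power_mono) auto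
    finally show ?thesis .
  qed
  moreover have "6 * \<mu> \<le> \<mu>\<^sup>2 / 30"
    using \<open>200 \<le> \<mu>\<close> by (simp add: power2_eq_square)
  ultimately have "6 * \<mu> + 48 * k \<le> (\<mu> - \<eta> * k / 25)\<^sup>2"
    using zero_le_power2[of \<mu>] by linarith
  moreover have "0 < (\<mu> - \<eta> * k / 25)\<^sup>2"
    using \<open>24 / 25 * \<mu> \<le> \<mu> - \<eta> * k / 25\<close> \<open>200 \<le> \<mu>\<close> by simp
  ultimately show ?thesis
    by (simp add: pos_divide_le_eq)
qed

theorem lemma2p11:
  fixes \<eta> :: real
  assumes "\<eta> > 0"
  shows "\<exists>k0::nat. \<forall>k n :: nat. \<forall>P :: nat set.
           k \<ge> k0 \<longrightarrow> n \<ge> 2 * k \<longrightarrow> P \<subseteq> {1..n} \<longrightarrow>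
           \<eta> \<le> real (card P) / real n \<longrightarrow> real (card P) / real n \<le> 1 - \<eta> \<longrightarrow>
           measure_pmf.prob (pmf_of_set (matchings n k))
              {M. real (crossing P M) \<ge> \<eta> * real k / 25} \<ge> 5 / 6"
proof (intro exI[of _ "nat \<lceil>200 / \<eta>\<^sup>2\<rceil> + 6"] allI impI)
  fix k n :: nat and P :: "nat set"
  assume k: "nat \<lceil>200 / \<eta>\<^sup>2\<rceil> + 6 \<le> k" and n: "2 * k \<le> n" and P: "P \<subseteq> {1..n}"
    and lo: "\<eta> \<le> real (card P) / real n" and hi: "real (card P) / real n \<le> 1 - \<eta>"
  define \<mu> where "\<mu> = real k * real (card (crossing_edges P n)) / real (n choose 2)"
  have "6 \<le> n"
    using k n by linarith
  have "200 / \<eta>\<^sup>2 \<le> real k"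
    using real_nat_ceiling_ge[of "200 / \<eta>\<^sup>2"] k by linarith
  then have "200 \<le> real k * \<eta>\<^sup>2"
    using assms by (simp add: pos_divide_le_eq)
  have "real k * \<eta> \<le> real k * (real (card (crossing_edges P n)) / real (n choose 2))"
    using crossing_edges_density_ge[OF P _ _ lo hi] \<open>6 \<le> n\<close> assms by (intro mult_left_mono) auto
  then have "real k * \<eta> \<le> \<mu>"
    unfolding \<mu>_def by simp
  moreover have "0 < \<eta> * real k"
    using assms k by simp
  ultimately have "\<eta> * real k / 25 < \<mu>"
    by (simp add: mult.commute)
  then have "1 - (\<mu> + 8 * real k) / (\<mu> - \<eta> * real k / 25)\<^sup>2
      \<le> measure_pmf.prob (pmf_of_set (matchings n k)) {M. \<eta> * real k / 25 \<le> real (crossing P M)}"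
    unfolding \<mu>_def by (rule prob_matchings_crossing_ge[OF \<open>6 \<le> n\<close> n])
  moreover have "(\<mu> + 8 * real k) / (\<mu> - \<eta> * real k / 25)\<^sup>2 \<le> 1 / 6"
    using lo hi by (intro variance_ratio_le_one_sixth assms \<open>200 \<le> real k * \<eta>\<^sup>2\<close> \<open>real k * \<eta> \<le> \<mu>\<close>) simp
  ultimately show "5 / 6 \<le> measure_pmf.prob (pmf_of_set (matchings n k))
      {M. \<eta> * real k / 25 \<le> real (crossing P M)}"
    by linarith
qed

end
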